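(* For all positive integers $m$ and all $r = 0,1,\ldots,m-1$, the stopping distance of $H(r,m)$ is $2^{r+1}$.
   Context: All matrices are binary. The matrices $G(r,m)$, $0\le r\le m$, are defined recursively by $G(m,m) = I_{2^m}$, $G(0,m) = (11\cdots1)$ (length $2^m$), and for $0<r<m$, $G(r,m) = \begin{pmatrix} G(r,m-1) & G(r,m-1) \\ \mathbf{0} & G(r-1,m-1)\end{pmatrix}$. The matrices $H(r,m)$ are defined by: for all $m \ge 0$, $H(0,m) = (11\cdots1)$ (length $2^m$), $H(m-1,m) = G(m-1,m)$, $H(m,m) = I_{2^m}$; and for all positive integers $m$ and $r = 1,\ldots,m-2$, $$H(r,m) = \begin{pmatrix} H(r,m-1) & H(r,m-1) \\ \mathbf{0} & H(r-1,m-1) \\ H(r-1,m-1) & \mathbf{0}\end{pmatrix}.$$ For a matrix $H$, the stopping distance $s(H)$ is the largest integer such that for every set of $s(H)-1$ or fewer columns of $H$, the projection of $H$ onto those columns contains at least one row of Hamming weight exactly one. *)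

theory Defs
  imports Main
begin

text \<open>Binary matrices are represented as lists of rows; each row is a list of
  booleans (True = 1, False = 0) of the common length (number of columns).\<close>

type_synonym bmat = "bool list list"

definition ones_row :: "nat \<Rightarrow> bmat" where
  "ones_row n = [replicate n True]"

definition ident :: "nat \<Rightarrow> bmat" where
  "ident n = map (\<lambda>i. map (\<lambda>j. i = j) [0..<n]) [0..<n]"

definition dup :: "bmat \<Rightarrow> bmat" where
  "dup A = map (\<lambda>x. x @ x) A"

definition zl :: "nat \<Rightarrow> bmat \<Rightarrow> bmat" where
  "zl n A = map (\<lambda>x. replicate n False @ x) A"

definition zr :: "nat \<Rightarrow> bmat \<Rightarrow> bmat" where
  "zr n A = map (\<lambda>x. x @ replicate n False) A"

function Gmat :: "nat \<Rightarrow> nat \<Rightarrow> bmat" where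
  "Gmat r m =
     (if r = m then ident (2^m)
      else if r = 0 then ones_row (2^m)
      else if r < m then dup (Gmat r (m-1)) @ zl (2^(m-1)) (Gmat (r-1) (m-1))
      else [])"
  by pat_completeness auto
termination by (relation "measure snd") auto

function Hmat :: "nat \<Rightarrow> nat \<Rightarrow> bmat" where
  "Hmat r m =
     (if r = m then ident (2^m)
      else if r = 0 then ones_row (2^m)
      else if r + 1 = m then Gmat r m
      else if r < m then
        dup (Hmat r (m-1)) @ zl (2^(m-1)) (Hmat (r-1) (m-1))
          @ zr (2^(m-1)) (Hmat (r-1) (m-1))
      else [])"
  by pat_completeness auto
termination by (relation "measure snd") auto

definition ncols :: "bmat \<Rightarrow> nat" where
  "ncols H = (if H = [] then 0 else length (hd H))"

definition has_weight_one_row :: "bmat \<Rightarrow> nat set \<Rightarrow> bool" where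
  "has_weight_one_row H S = (\<exists>row \<in> set H. card {j \<in> S. row ! j} = 1)"

definition stopping_distance :: "bmat \<Rightarrow> nat" where
  "stopping_distance H = (GREATEST s. \<forall>S. S \<subseteq> {..<ncols H} \<and> S \<noteq> {} \<and> card S \<le> s - 1
                                   \<longrightarrow> has_weight_one_row H S)"

end

(*
  Call a nonempty set of columns on which no row has weight one a stopping set; the stopping
  distance is then the least size of a stopping set. Write a column set of a matrix of width 2n
  as L \<union> (n + R) with L, R \<subseteq> {0..<n}.

  For 0 < r < m - 1, H(r,m) stacks the rows (a a), (0 b) and (b 0) with a a row of
  A = H(r,m-1) and b a row of B = H(r-1,m-1). On a stopping set, the rows (0 b) and (b 0)
  force each of L and R to be empty or a stopping set of B, and if one of them is empty the
  rows (a a) make the other a stopping set of A. By induction on m, either way at least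
  2^(r+1) columns are needed, and T \<union> (n + T) attains this for a minimal stopping set T of B.

  The base case H(m-1,m) = G(m-1,m) = ((e_i e_i); (0 G(m-2,m-1))) has the set of all 2^m
  columns as its only stopping set: the rows (e_i e_i) force L = R, and then the rows (0 g)
  force R, and hence S, to be empty or everything. H(0,m), a single all-ones row, has smallest
  stopping sets of size 2.
*)

theory Submission
  imports Defs
begin

definition row_weight :: "bool list \<Rightarrow> nat set \<Rightarrow> nat" where
  "row_weight x S = card {j \<in> S. x ! j}"

definition has_width :: "bmat \<Rightarrow> nat \<Rightarrow> bool" where
  "has_width H N \<longleftrightarrow> H \<noteq> [] \<and> (\<forall>x \<in> set H. length x = N)"

definition stopping_set :: "bmat \<Rightarrow> nat \<Rightarrow> nat set \<Rightarrow> bool" where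
  "stopping_set H N S \<longleftrightarrow> S \<subseteq> {..<N} \<and> S \<noteq> {} \<and> (\<forall>x \<in> set H. row_weight x S \<noteq> 1)"

definition min_stopping_set_size :: "bmat \<Rightarrow> nat \<Rightarrow> nat \<Rightarrow> bool" where
  "min_stopping_set_size H N d \<longleftrightarrow>
     (\<forall>S. stopping_set H N S \<longrightarrow> d \<le> card S) \<and> (\<exists>S. stopping_set H N S \<and> card S = d)"

lemma stopping_distance_eq_min_stopping_set_size:
  assumes "has_width H N" "min_stopping_set_size H N d"
  shows "stopping_distance H = d"
proof -
  have ncols: "ncols H = N"
    using assms(1) by (cases H) (auto simp: has_width_def ncols_def)
  have weight_one: "has_weight_one_row H S \<longleftrightarrow> (\<exists>x \<in> set H. row_weight x S = 1)" for S
    by (simp add: has_weight_one_row_def row_weight_def)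
  obtain T where T: "stopping_set H N T" "card T = d"
    using assms(2) min_stopping_set_size_def by blast
  then have "0 < d"
    by (metis card_gt_0_iff finite_lessThan finite_subset stopping_set_def)
  show ?thesis
    unfolding stopping_distance_def
  proof (rule Greatest_equality)
    show "\<forall>S. S \<subseteq> {..<ncols H} \<and> S \<noteq> {} \<and> card S \<le> d - 1 \<longrightarrow> has_weight_one_row H S"
    proof (intro allI impI)
      fix S
      assume S: "S \<subseteq> {..<ncols H} \<and> S \<noteq> {} \<and> card S \<le> d - 1"
      then have "\<not> stopping_set H N S"
        using assms(2) \<open>0 < d\<close> by (auto simp: min_stopping_set_size_def)
      then show "has_weight_one_row H S"
        using S by (simp add: stopping_set_def weight_one ncols)
    qed
  next
    fix e
    assume "\<forall>S. S \<subseteq> {..<ncols H} \<and> S \<noteq> {} \<and> card S \<le> e - 1 \<longrightarrow> has_weight_one_row H S"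
    then have "\<not> (T \<subseteq> {..<ncols H} \<and> T \<noteq> {} \<and> card T \<le> e - 1)"
      using T(1) by (auto simp: stopping_set_def weight_one)
    then show "e \<le> d"
      using T by (auto simp: ncols stopping_set_def)
  qed
qed

lemma row_weight_empty [simp]: "row_weight x {} = 0"
  by (simp add: row_weight_def)

lemma row_weight_replicate_True:
  "S \<subseteq> {..<n} \<Longrightarrow> row_weight (replicate n True) S = card S"
  unfolding row_weight_def by (rule arg_cong[where f = card]) auto

lemma row_weight_replicate_False:
  assumes "S \<subseteq> {..<n}"
  shows "row_weight (replicate n False) S = 0"
proof -
  have "{j \<in> S. replicate n False ! j} = {}"
    using assms by auto
  then show ?thesis
    by (metis card.empty row_weight_def)
qed

lemma row_weight_unit_row:
  assumes "i < n" "S \<subseteq> {..<n}"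
  shows "row_weight (map (\<lambda>j. i = j) [0..<n]) S = (if i \<in> S then 1 else 0)"
proof -
  have "{j \<in> S. map (\<lambda>j. i = j) [0..<n] ! j} = S \<inter> {i}"
    using assms by auto
  then show ?thesis by (simp add: row_weight_def)
qed

lemma card_Un_shift:
  fixes L R :: "nat set"
  assumes "L \<subseteq> {..<n}" "finite R"
  shows "card (L \<union> (+) n ` R) = card L + card R"
proof -
  have "card (L \<union> (+) n ` R) = card L + card ((+) n ` R)"
    using assms by (intro card_Un_disjoint) (auto intro: finite_subset)
  then show ?thesis by (simp add: card_image)
qed

lemma row_weight_append:
  assumes "length x = n" "L \<subseteq> {..<n}" "finite R"
  shows "row_weight (x @ y) (L \<union> (+) n ` R) = row_weight x L + row_weight y R"
proof -
  have "{j \<in> L \<union> (+) n ` R. (x @ y) ! j} = {j \<in> L. x ! j} \<union> (+) n ` {k \<in> R. y ! k}"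
    using assms(1,2) by (auto simp: nth_append)
  moreover have "{j \<in> L. x ! j} \<subseteq> {..<n}" "finite {k \<in> R. y ! k}"
    using assms(2,3) by auto
  ultimately show ?thesis
    unfolding row_weight_def by (metis (no_types, lifting) card_Un_shift)
qed

lemma subset_lessThan_double_split:
  fixes S :: "nat set"
  assumes "S \<subseteq> {..<2 * n}"
  obtains L R where "L \<subseteq> {..<n}" "R \<subseteq> {..<n}" "S = L \<union> (+) n ` R"
proof
  show "{j \<in> S. j < n} \<subseteq> {..<n}" "{k. n + k \<in> S} \<subseteq> {..<n}"
    using assms by auto
  show "S = {j \<in> S. j < n} \<union> (+) n ` {k. n + k \<in> S}"
    by (auto simp: image_iff) (metis le_add_diff_inverse not_less)
qed

lemma set_dup [simp]: "set (dup A) = (\<lambda>x. x @ x) ` set A"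
  by (simp add: dup_def)

lemma set_zl [simp]: "set (zl n A) = (\<lambda>x. replicate n False @ x) ` set A"
  by (simp add: zl_def)

lemma set_zr [simp]: "set (zr n A) = (\<lambda>x. x @ replicate n False) ` set A"
  by (simp add: zr_def)

lemma stopping_set_H_block_card_ge:
  assumes "has_width A n" "has_width B n"
    and A: "\<And>S. stopping_set A n S \<Longrightarrow> 2 * d \<le> card S"
    and B: "\<And>S. stopping_set B n S \<Longrightarrow> d \<le> card S"
    and S: "stopping_set (dup A @ zl n B @ zr n B) (2 * n) S"
  shows "2 * d \<le> card S"
proof -
  obtain L R where LR: "L \<subseteq> {..<n}" "R \<subseteq> {..<n}" "S = L \<union> (+) n ` R"
    using S subset_lessThan_double_split stopping_set_def by metis
  have weight: "row_weight (x @ y) S = row_weight x L + row_weight y R" if "length x = n" for x y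
    using row_weight_append LR finite_subset that by blast
  have rows_S: "\<forall>x \<in> set (dup A @ zl n B @ zr n B). row_weight x S \<noteq> 1"
    using S stopping_set_def by blast
  have rows_A: "row_weight x L + row_weight x R \<noteq> 1" if "x \<in> set A" for x
  proof -
    have "row_weight (x @ x) S \<noteq> 1"
      using rows_S that by simp
    then show ?thesis
      using weight that assms(1) by (simp add: has_width_def)
  qed
  have "row_weight y R \<noteq> 1" "row_weight y L \<noteq> 1" if "y \<in> set B" for y
  proof -
    have "row_weight (replicate n False @ y) S \<noteq> 1" "row_weight (y @ replicate n False) S \<noteq> 1"
      using rows_S that by auto
    then show "row_weight y R \<noteq> 1" "row_weight y L \<noteq> 1"
      using that assms(2) LR(1,2) by (simp_all add: has_width_def weight row_weight_replicate_False)
  qed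
  then have halves_B: "L = {} \<or> d \<le> card L" "R = {} \<or> d \<le> card R"
    using B[of L] B[of R] LR(1,2) by (auto simp: stopping_set_def)
  have card_S: "card S = card L + card R"
    using card_Un_shift[OF LR(1)] LR(2,3) finite_subset by blast
  have "L \<noteq> {} \<or> R \<noteq> {}"
    using S LR(3) by (auto simp: stopping_set_def)
  then consider "R = {}" "L \<noteq> {}" | "L = {}" "R \<noteq> {}" | "L \<noteq> {}" "R \<noteq> {}"
    by blast
  then show ?thesis
  proof cases
    case 1
    then have "stopping_set A n L"
      using rows_A LR(1) by (simp add: stopping_set_def)
    then show ?thesis
      using A card_S 1 by simp
  next
    case 2
    then have "stopping_set A n R"
      using rows_A LR(2) by (simp add: stopping_set_def)
    then show ?thesis
      using A card_S 2 by simp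
  next
    case 3
    then show ?thesis
      using halves_B card_S by simp
  qed
qed

lemma stopping_set_H_block_double:
  assumes "has_width A n" "has_width B n" "stopping_set B n T"
  shows "stopping_set (dup A @ zl n B @ zr n B) (2 * n) (T \<union> (+) n ` T)"
proof -
  have T: "T \<subseteq> {..<n}" "finite T"
    using assms(3) finite_subset by (auto simp: stopping_set_def)
  have weight: "row_weight (x @ y) (T \<union> (+) n ` T) = row_weight x T + row_weight y T"
    if "length x = n" for x y
    using row_weight_append T that by simp
  have "k + k \<noteq> (1::nat)" for k
    by presburger
  then have "row_weight x (T \<union> (+) n ` T) \<noteq> 1" if "x \<in> set (dup A @ zl n B @ zr n B)" for x
    using that assms T by (auto simp: stopping_set_def has_width_def weight row_weight_replicate_False)
  then show ?thesis
    using T assms(3) by (auto simp: stopping_set_def)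
qed

lemma min_stopping_set_size_H_block:
  assumes "has_width A n" "has_width B n"
    and "min_stopping_set_size A n (2 * d)" "min_stopping_set_size B n d"
  shows "min_stopping_set_size (dup A @ zl n B @ zr n B) (2 * n) (2 * d)"
proof -
  have A: "\<And>S. stopping_set A n S \<Longrightarrow> 2 * d \<le> card S"
    and B: "\<And>S. stopping_set B n S \<Longrightarrow> d \<le> card S"
    using assms(3,4) by (simp_all add: min_stopping_set_size_def)
  obtain T where T: "stopping_set B n T" "card T = d"
    using assms(4) min_stopping_set_size_def by blast
  then have "T \<subseteq> {..<n}"
    by (simp add: stopping_set_def)
  then have "card (T \<union> (+) n ` T) = 2 * d"
    using card_Un_shift[of T n T] T(2) finite_subset[of T] by auto
  then show ?thesis
    unfolding min_stopping_set_size_def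
    using stopping_set_H_block_card_ge[OF assms(1,2) A B] stopping_set_H_block_double[OF assms(1,2) T(1)]
    by blast
qed

lemma set_ident: "set (ident n) = (\<lambda>i. map (\<lambda>j. i = j) [0..<n]) ` {..<n}"
  by (auto simp: ident_def)

lemma lessThan_double_eq: "{..<2 * n} = {..<n} \<union> (+) n ` {..<n::nat}"
  unfolding lessThan_atLeast0 image_add_atLeastLessThan by (simp add: ivl_disj_un mult_2)

lemma stopping_set_G_block_iff:
  assumes G: "\<And>S. stopping_set G n S \<longleftrightarrow> S = {..<n}"
  shows "stopping_set (dup (ident n) @ zl n G) (2 * n) S \<longleftrightarrow> S = {..<2 * n}"
proof
  assume S: "stopping_set (dup (ident n) @ zl n G) (2 * n) S"
  obtain L R where LR: "L \<subseteq> {..<n}" "R \<subseteq> {..<n}" "S = L \<union> (+) n ` R"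
    using S subset_lessThan_double_split stopping_set_def by metis
  have weight: "row_weight (x @ y) S = row_weight x L + row_weight y R" if "length x = n" for x y
    using row_weight_append LR finite_subset that by blast
  have rows_S: "\<forall>x \<in> set (dup (ident n) @ zl n G). row_weight x S \<noteq> 1"
    using S stopping_set_def by blast
  have "i \<in> L \<longleftrightarrow> i \<in> R" if "i < n" for i
  proof -
    let ?e = "map (\<lambda>j. i = j) [0..<n]"
    have "?e @ ?e \<in> set (dup (ident n) @ zl n G)"
      using that by (auto simp: set_ident)
    then have "row_weight (?e @ ?e) S \<noteq> 1"
      using rows_S by blast
    then show ?thesis
      using that LR(1,2) by (auto simp: weight row_weight_unit_row split: if_splits)
  qed
  then have "L = R"
    using LR by blast
  moreover have "R \<noteq> {}"
    using S LR \<open>L = R\<close> by (auto simp: stopping_set_def)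
  moreover have "row_weight g R \<noteq> 1" if "g \<in> set G" for g
  proof -
    have "row_weight (replicate n False @ g) S \<noteq> 1"
      using rows_S that by simp
    then show ?thesis
      using LR(1) by (simp add: weight row_weight_replicate_False)
  qed
  ultimately have "stopping_set G n R"
    using LR(2) by (simp add: stopping_set_def)
  then have "L = {..<n}" "R = {..<n}"
    using G \<open>L = R\<close> by blast+
  then show "S = {..<2 * n}"
    using LR(3) lessThan_double_eq by simp
next
  assume S: "S = {..<2 * n}"
  have full: "stopping_set G n {..<n}"
    using G by blast
  have weight: "row_weight (x @ y) {..<2 * n} = row_weight x {..<n} + row_weight y {..<n}"
    if "length x = n" for x y
    unfolding lessThan_double_eq using row_weight_append that by blast
  have "row_weight x {..<2 * n} \<noteq> 1" if x: "x \<in> set (dup (ident n) @ zl n G)" for x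
  proof -
    consider (unit) i where "i < n" "x = map (\<lambda>j. i = j) [0..<n] @ map (\<lambda>j. i = j) [0..<n]"
      | (lower) g where "g \<in> set G" "x = replicate n False @ g"
      using x by (auto simp: set_ident)
    then show ?thesis
    proof cases
      case unit
      then show ?thesis
        by (simp add: weight row_weight_unit_row)
    next
      case lower
      then show ?thesis
        using full by (simp add: weight row_weight_replicate_False stopping_set_def)
    qed
  qed
  moreover have "{..<2 * n} \<noteq> {}"
    using full by (simp add: stopping_set_def lessThan_empty_iff)
  ultimately show "stopping_set (dup (ident n) @ zl n G) (2 * n) S"
    using S by (simp add: stopping_set_def)
qed

lemma stopping_set_ones_row:
  "stopping_set (ones_row n) n S \<longleftrightarrow> S \<subseteq> {..<n} \<and> S \<noteq> {} \<and> card S \<noteq> 1"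
  by (auto simp: stopping_set_def ones_row_def row_weight_replicate_True)

lemma min_stopping_set_size_ones_row:
  assumes "2 \<le> n"
  shows "min_stopping_set_size (ones_row n) n 2"
proof -
  have "2 \<le> card S" if "stopping_set (ones_row n) n S" for S
  proof -
    have "finite S" "S \<noteq> {}" "card S \<noteq> 1"
      using that finite_subset by (auto simp: stopping_set_ones_row)
    then show ?thesis
      by (metis One_nat_def card_0_eq less_2_cases not_less)
  qed
  moreover have "stopping_set (ones_row n) n {0, 1}"
    using assms by (simp add: stopping_set_ones_row)
  ultimately show ?thesis
    unfolding min_stopping_set_size_def by fastforce
qed

declare Gmat.simps [simp del] Hmat.simps [simp del]

lemma has_width_ident: "0 < n \<Longrightarrow> has_width (ident n) n"
  by (auto simp: has_width_def ident_def)

lemma has_width_ones_row: "has_width (ones_row n) n"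
  by (simp add: has_width_def ones_row_def)

lemma has_width_G_block: "has_width A n \<Longrightarrow> has_width B n \<Longrightarrow> has_width (dup A @ zl n B) (2 * n)"
  by (auto simp: has_width_def dup_def zl_def)

lemma has_width_H_block:
  "has_width A n \<Longrightarrow> has_width B n \<Longrightarrow> has_width (dup A @ zl n B @ zr n B) (2 * n)"
  by (auto simp: has_width_def dup_def zl_def zr_def)

lemma has_width_Gmat: "r \<le> m \<Longrightarrow> has_width (Gmat r m) (2 ^ m)"
proof (induction r m rule: Gmat.induct)
  case (1 r m)
  show ?case
  proof (cases "r = m \<or> r = 0")
    case True
    then show ?thesis
      by (subst Gmat.simps) (auto simp: has_width_ident has_width_ones_row)
  next
    case False
    then have "r \<le> m - 1" "r - 1 \<le> m - 1" "(2::nat) ^ m = 2 * 2 ^ (m - 1)"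
      using "1.prems" by (auto simp: power_eq_if)
    then show ?thesis
      using False "1" has_width_G_block by (subst Gmat.simps) auto
  qed
qed

lemma has_width_Hmat: "r \<le> m \<Longrightarrow> has_width (Hmat r m) (2 ^ m)"
proof (induction r m rule: Hmat.induct)
  case (1 r m)
  show ?case
  proof (cases "r = m \<or> r = 0 \<or> r + 1 = m")
    case True
    then show ?thesis
      using "1.prems" by (subst Hmat.simps) (auto simp: has_width_ident has_width_ones_row has_width_Gmat)
  next
    case False
    then have "r \<le> m - 1" "r - 1 \<le> m - 1" "(2::nat) ^ m = 2 * 2 ^ (m - 1)"
      using "1.prems" by (auto simp: power_eq_if)
    then show ?thesis
      using False "1" has_width_H_block by (subst Hmat.simps) auto
  qed
qed

lemma Gmat_0_1: "Gmat 0 (Suc 0) = ones_row 2"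
  by (simp add: Gmat.simps)

lemma Gmat_Suc_Suc_diag:
  "Gmat (Suc r) (Suc (Suc r)) = dup (ident (2 ^ Suc r)) @ zl (2 ^ Suc r) (Gmat r (Suc r))"
  by (subst Gmat.simps) (simp add: Gmat.simps[of "Suc r" "Suc r"])

lemma Hmat_0: "0 < m \<Longrightarrow> Hmat 0 m = ones_row (2 ^ m)"
  by (simp add: Hmat.simps)

lemma Hmat_Suc_diag: "Hmat r (Suc r) = Gmat r (Suc r)"
  by (cases r) (simp_all add: Hmat.simps Gmat_0_1)

lemma Hmat_Suc:
  "0 < r \<Longrightarrow> r < m \<Longrightarrow>
     Hmat r (Suc m) = dup (Hmat r m) @ zl (2 ^ m) (Hmat (r - 1) m) @ zr (2 ^ m) (Hmat (r - 1) m)"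
  by (subst Hmat.simps) simp

lemma stopping_set_Gmat_iff: "stopping_set (Gmat r (Suc r)) (2 ^ Suc r) S \<longleftrightarrow> S = {..<2 ^ Suc r}"
proof (induction r arbitrary: S)
  case 0
  have "S = {..<2}" if "S \<subseteq> {..<2}" "S \<noteq> {}" "card S \<noteq> 1"
  proof -
    have "card S \<le> 2" "card S \<noteq> 0"
      using that card_mono[OF _ that(1)] finite_subset by fastforce+
    then have "card S = card {..<2::nat}"
      using that(3) by simp
    then show ?thesis
      using that(1) by (simp add: card_subset_eq)
  qed
  then show ?case
    by (auto simp: Gmat_0_1 stopping_set_ones_row lessThan_empty_iff)
next
  case (Suc r)
  then show ?case
    unfolding Gmat_Suc_Suc_diag power_Suc[of 2 "Suc r"]
    by (rule stopping_set_G_block_iff)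
qed

lemma min_stopping_set_size_Gmat: "min_stopping_set_size (Gmat r (Suc r)) (2 ^ Suc r) (2 ^ Suc r)"
  unfolding min_stopping_set_size_def stopping_set_Gmat_iff by simp

lemma min_stopping_set_size_Hmat: "r < m \<Longrightarrow> min_stopping_set_size (Hmat r m) (2 ^ m) (2 ^ (r + 1))"
proof (induction m arbitrary: r)
  case 0
  then show ?case by simp
next
  case (Suc m)
  consider "r = 0" | "r = m" | "0 < r" "r < m"
    using Suc.prems by linarith
  then show ?case
  proof cases
    case 1
    then show ?thesis
      by (simp add: Hmat_0 min_stopping_set_size_ones_row)
  next
    case 2
    then show ?thesis
      using min_stopping_set_size_Gmat by (simp add: Hmat_Suc_diag)
  next
    case 3
    have "min_stopping_set_size (Hmat r m) (2 ^ m) (2 * 2 ^ r)"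
      "min_stopping_set_size (Hmat (r - 1) m) (2 ^ m) (2 ^ r)"
      using Suc.IH[of r] Suc.IH[of "r - 1"] 3 by simp_all
    then show ?thesis
      using 3 by (simp add: Hmat_Suc min_stopping_set_size_H_block has_width_Hmat)
  qed
qed

theorem proposition12:
  fixes m r :: nat
  assumes "0 < m" and "r < m"
  shows "stopping_distance (Hmat r m) = 2 ^ (r + 1)"
proof (rule stopping_distance_eq_min_stopping_set_size)
  show "has_width (Hmat r m) (2 ^ m)"
    using assms(2) by (simp add: has_width_Hmat)
  show "min_stopping_set_size (Hmat r m) (2 ^ m) (2 ^ (r + 1))"
    using assms(2) by (rule min_stopping_set_size_Hmat)
qed

end
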